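(* Let $1<K<n$ and $x\in\mathbb{R}^n$, and let $s(x)$, $i_x$, $\delta(x)$, $u(x)$ be as defined in the context. Then: (1) for $i=1,\dots,K-1$: $s(x)_{i+1}-s(x)_i=\frac{1}{K-i+1}\big(s(x)_{i+1}-|x|_{[i]}\big)=\frac{1}{K-i}\big(s(x)_i-|x|_{[i]}\big)$; (2) $s(x)_1\ge\dots\ge s(x)_{i_x}$ and $s(x)_{i_x}\le\dots\le s(x)_K$; (3) $u(x)\ge_m|x|$; (4) $u(x)_1=\max\{|x|_{[1]},s(x)_1\}$.
   Context: For $v\in\mathbb{R}^n$, $v_{[i]}$ is the $i$-th largest component, and $|x|$ is the componentwise absolute value, so $|x|_{[i]}$ is the $i$-th largest absolute value. Define $s(x)_i=\frac{\sum_{j=i}^n|x|_{[j]}}{K-i+1}$ for $i=1,\dots,K$, and $s(x)_0=s(x)_{K+1}=\infty$. Let $i_x$ be the smallest index in $\{1,\dots,K\}$ minimizing $s(x)_i$, $\delta(x)=s(x)_{i_x}$, and define $u(x)\in\mathbb{R}^n$ by $u(x)_i=|x|_{[i]}$ for $i\le i_x-1$, $u(x)_i=\delta(x)$ for $i_x\le i\le K$, and $u(x)_i=0$ for $i>K$. $a\ge_m b$ means $\sum_{i=1}^j a_{[i]}\ge\sum_{i=1}^j b_{[i]}$ for $j<n$ with equality for $j=n$. *)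

theory Defs
  imports Main "HOL.Real"
begin

text \<open>Vectors x in R^n are represented as lists of reals of length n; components
and indices are 1-based as in the paper.\<close>

definition ord_comp :: "real list \<Rightarrow> nat \<Rightarrow> real" where
  "ord_comp v i = rev (sort v) ! (i - 1)"

definition abs_ord :: "real list \<Rightarrow> nat \<Rightarrow> real" where
  "abs_ord x i = ord_comp (map abs x) i"

text \<open>s(x)_i for i = 1..K (the conventions s_0 = s_(K+1) = infinity play no role here).\<close>
definition sK :: "nat \<Rightarrow> real list \<Rightarrow> nat \<Rightarrow> real" where
  "sK K x i = (\<Sum>j\<in>{i..length x}. abs_ord x j) / (real K - real i + 1)"

definition ix :: "nat \<Rightarrow> real list \<Rightarrow> nat" where
  "ix K x = (LEAST i. 1 \<le> i \<and> i \<le> K \<and> (\<forall>j\<in>{1..K}. sK K x i \<le> sK K x j))"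

definition delta :: "nat \<Rightarrow> real list \<Rightarrow> real" where
  "delta K x = sK K x (ix K x)"

text \<open>u(x), as a list of length n; component i (1-based) is at list position i-1.\<close>
definition uvec :: "nat \<Rightarrow> real list \<Rightarrow> real list" where
  "uvec K x = map (\<lambda>i. if i \<le> ix K x - 1 then abs_ord x i
                        else if i \<le> K then delta K x else 0) [1..<length x + 1]"

definition majorizes :: "real list \<Rightarrow> real list \<Rightarrow> bool" where
  "majorizes a b \<longleftrightarrow> length a = length b \<and>
     (\<forall>j<length a. (\<Sum>i=1..j. ord_comp a i) \<ge> (\<Sum>i=1..j. ord_comp b i)) \<and>
     (\<Sum>i=1..length a. ord_comp a i) = (\<Sum>i=1..length b. ord_comp b i)"

end

theory Submission
  imports Defs "HOL-Library.Multiset"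
begin

text \<open>Write a_i for |x|_[i] and T_i = a_i + ... + a_n, so that s_i = T_i / (K - i + 1).
  Since T_i = a_i + T_(i+1), the difference s_(i+1) - s_i has the sign of s_(i+1) - a_i and
  of s_i - a_i. As a is nonincreasing, once s stops decreasing it never decreases again:
  a_(i+1) <= a_i <= s_(i+1). So s strictly decreases before its first minimiser i_x and is
  nondecreasing after it, and the same sign relations give a_(i_x) <= delta < a_(i_x - 1).
  Hence u is nonincreasing, dominates a on its first K entries, and has the same total,
  because (K - i_x + 1) delta = T_(i_x); the majorisation follows.\<close>

lemma abs_ord_nonneg: "1 \<le> j \<Longrightarrow> j \<le> length x \<Longrightarrow> 0 \<le> abs_ord x j"
proof -
  assume "1 \<le> j" "j \<le> length x"
  then have "rev (sort (map abs x)) ! (j - 1) \<in> set (rev (sort (map abs x)))"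
    by (intro nth_mem) simp
  then show ?thesis unfolding abs_ord_def ord_comp_def by auto
qed

lemma abs_ord_antimono:
  assumes "1 \<le> i" "i \<le> j" "j \<le> length x"
  shows "abs_ord x j \<le> abs_ord x i"
proof -
  have "sort (map abs x) ! (length x - j) \<le> sort (map abs x) ! (length x - i)"
    by (rule sorted_nth_mono) (use assms in auto)
  then show ?thesis unfolding abs_ord_def ord_comp_def using assms by (simp add: rev_nth)
qed

lemma ord_comp_eq_nth_if_nonincreasing:
  assumes "\<And>i j. i \<le> j \<Longrightarrow> j < length l \<Longrightarrow> l ! j \<le> l ! i"
  shows "ord_comp l i = l ! (i - 1)"
proof -
  have "sorted (rev l)"
    unfolding sorted_iff_nth_mono using assms by (auto simp: rev_nth)
  then have "sort l = rev l" by (intro properties_for_sort) auto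
  then show ?thesis unfolding ord_comp_def by simp
qed

lemma sum_atLeastAtMost_split:
  fixes m p n :: nat
  assumes "m \<le> Suc p" "p \<le> n"
  shows "sum f {m..n} = sum f {m..p} + sum f {Suc p..n}"
  using sum.ub_add_nat[of m p f "n - p"] assms by simp

lemma sK_Suc_diff:
  assumes "1 \<le> i" "i < K" "K \<le> length x"
  shows "sK K x (Suc i) - sK K x i = (sK K x (Suc i) - abs_ord x i) / (real K - real i + 1)"
    and "sK K x (Suc i) - sK K x i = (sK K x i - abs_ord x i) / (real K - real i)"
proof -
  define T where "T i = (\<Sum>j\<in>{i..length x}. abs_ord x j)" for i
  have T_Suc: "T i = abs_ord x i + T (Suc i)"
    unfolding T_def using assms by (simp add: sum.atLeast_Suc_atMost)
  have "sK K x i = T i / (real K - real i + 1)" "sK K x (Suc i) = T (Suc i) / (real K - real i)"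
    unfolding sK_def T_def using assms by simp_all
  then show "sK K x (Suc i) - sK K x i = (sK K x (Suc i) - abs_ord x i) / (real K - real i + 1)"
    and "sK K x (Suc i) - sK K x i = (sK K x i - abs_ord x i) / (real K - real i)"
    unfolding T_Suc using assms by (simp_all add: field_simps)
qed

lemma sK_le_Suc_iff_abs_ord_le_sK_Suc:
  assumes "1 \<le> i" "i < K" "K \<le> length x"
  shows "sK K x i \<le> sK K x (Suc i) \<longleftrightarrow> abs_ord x i \<le> sK K x (Suc i)"
proof -
  have "0 < real K - real i + 1" using assms by simp
  then show ?thesis using sK_Suc_diff(1)[OF assms] by (smt (verit) divide_nonneg_pos divide_neg_pos)
qed

lemma sK_le_Suc_iff_abs_ord_le_sK:
  assumes "1 \<le> i" "i < K" "K \<le> length x"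
  shows "sK K x i \<le> sK K x (Suc i) \<longleftrightarrow> abs_ord x i \<le> sK K x i"
proof -
  have "0 < real K - real i" using assms by simp
  then show ?thesis using sK_Suc_diff(2)[OF assms] by (smt (verit) divide_nonneg_pos divide_neg_pos)
qed

lemma sK_le_Suc_propagates:
  assumes "1 \<le> i" "Suc i < K" "K \<le> length x" "sK K x i \<le> sK K x (Suc i)"
  shows "sK K x (Suc i) \<le> sK K x (Suc (Suc i))"
proof -
  have "abs_ord x (Suc i) \<le> abs_ord x i" by (rule abs_ord_antimono) (use assms in auto)
  also have "abs_ord x i \<le> sK K x (Suc i)"
    using assms sK_le_Suc_iff_abs_ord_le_sK_Suc by simp
  finally show ?thesis using sK_le_Suc_iff_abs_ord_le_sK[of "Suc i" K x] assms by simp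
qed

lemma sK_le_Suc_from:
  assumes "1 \<le> i" "i \<le> k" "k < K" "K \<le> length x" "sK K x i \<le> sK K x (Suc i)"
  shows "sK K x k \<le> sK K x (Suc k)"
  using assms(2,3)
proof (induction k rule: dec_induct)
  case base
  then show ?case using assms(5) by simp
next
  case (step k)
  then show ?case using sK_le_Suc_propagates[of k K x] assms(1,4) by simp
qed

definition u_comp :: "nat \<Rightarrow> real list \<Rightarrow> nat \<Rightarrow> real" where
  "u_comp K x i = (if i \<le> ix K x - 1 then abs_ord x i else if i \<le> K then delta K x else 0)"

lemma length_uvec: "length (uvec K x) = length x"
  unfolding uvec_def by (simp del: upt_Suc)

lemma nth_uvec: "k < length x \<Longrightarrow> uvec K x ! k = u_comp K x (Suc k)"
  unfolding uvec_def u_comp_def by (simp del: upt_Suc)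

lemma prefix_sums_dominated:
  fixes a U :: "nat \<Rightarrow> real"
  assumes "K \<le> n"
    and a_nonneg: "\<And>i. K < i \<Longrightarrow> i \<le> n \<Longrightarrow> 0 \<le> a i"
    and a_le_U: "\<And>i. 1 \<le> i \<Longrightarrow> i \<le> K \<Longrightarrow> a i \<le> U i"
    and U_zero: "\<And>i. K < i \<Longrightarrow> U i = 0"
    and sums_eq: "sum U {1..K} = sum a {1..n}"
  shows "j \<le> n \<Longrightarrow> sum a {1..j} \<le> sum U {1..j}"
    and "sum U {1..n} = sum a {1..n}"
proof -
  have U_total: "sum U {1..j} = sum a {1..n}" if "K \<le> j" for j
    using sum_atLeastAtMost_split[of 1 K j U] that U_zero sums_eq by simp
  then show "sum U {1..n} = sum a {1..n}" using \<open>K \<le> n\<close> .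
  show "sum a {1..j} \<le> sum U {1..j}" if "j \<le> n"
  proof (cases "j \<le> K")
    case True
    then show ?thesis using a_le_U by (intro sum_mono) auto
  next
    case False
    have "sum a {1..j} \<le> sum a {1..n}" using a_nonneg False that by (intro sum_mono2) auto
    then show ?thesis using U_total False by simp
  qed
qed

context
  fixes x :: "real list" and K :: nat
  assumes K_gt_1: "1 < K" and K_less_length: "K < length x"
begin

lemma ix_is_minimiser: "1 \<le> ix K x \<and> ix K x \<le> K \<and> (\<forall>j\<in>{1..K}. sK K x (ix K x) \<le> sK K x j)"
proof -
  have "finite (sK K x ` {1..K})" "sK K x ` {1..K} \<noteq> {}" using K_gt_1 by auto
  then have "Min (sK K x ` {1..K}) \<in> sK K x ` {1..K}" by (rule Min_in)
  then obtain m where "m \<in> {1..K}" "sK K x m = Min (sK K x ` {1..K})" by auto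
  then have "\<exists>m. 1 \<le> m \<and> m \<le> K \<and> (\<forall>j\<in>{1..K}. sK K x m \<le> sK K x j)" by auto
  then show ?thesis unfolding ix_def by (rule LeastI_ex)
qed

lemma ix_ge_1: "1 \<le> ix K x"
  and ix_le_K: "ix K x \<le> K"
  and sK_ix_le: "j \<in> {1..K} \<Longrightarrow> sK K x (ix K x) \<le> sK K x j"
  using ix_is_minimiser by auto

lemma sK_Suc_less_before_ix:
  assumes "1 \<le> m" "m < ix K x"
  shows "sK K x (Suc m) < sK K x m"
proof (rule ccontr)
  assume "\<not> ?thesis"
  then have up: "sK K x k \<le> sK K x (Suc k)" if "m \<le> k" "k < K" for k
    using sK_le_Suc_from[of m k K x] that assms K_less_length by simp
  have "m < K" using assms ix_le_K by simp
  have "sK K x m \<le> sK K x j" if "j \<in> {1..K}" for j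
  proof (cases "m \<le> j")
    case True
    then show ?thesis using lift_Suc_mono_le_ivl[of "{m..<j}" "sK K x" m j] up that by auto
  next
    case False
    have "sK K x m \<le> sK K x (ix K x)"
      using lift_Suc_mono_le_ivl[of "{m..<ix K x}" "sK K x" m "ix K x"] up assms ix_le_K by auto
    also have "\<dots> \<le> sK K x j" using sK_ix_le that .
    finally show ?thesis .
  qed
  then have "ix K x \<le> m" unfolding ix_def using assms \<open>m < K\<close> by (intro Least_le) auto
  then show False using assms by simp
qed

lemma sK_antimono_upto_ix:
  assumes "1 \<le> i" "i \<le> j" "j \<le> ix K x"
  shows "sK K x j \<le> sK K x i"
proof (rule lift_Suc_antimono_le_ivl[of "{i..<j}"])
  show "sK K x (Suc n) \<le> sK K x n" if "n \<in> {i..<j}" for n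
    using sK_Suc_less_before_ix[of n] that assms by simp
qed (use assms in auto)

lemma sK_mono_from_ix:
  assumes "ix K x \<le> i" "i \<le> j" "j \<le> K"
  shows "sK K x i \<le> sK K x j"
proof (cases "ix K x < K")
  case True
  have "sK K x (ix K x) \<le> sK K x (Suc (ix K x))" using sK_ix_le True ix_ge_1 by simp
  then have "sK K x k \<le> sK K x (Suc k)" if "ix K x \<le> k" "k < K" for k
    using sK_le_Suc_from[of "ix K x" k K x] that ix_ge_1 K_less_length by simp
  then show ?thesis using lift_Suc_mono_le_ivl[of "{i..<j}" "sK K x" i j] assms by auto
next
  case False
  then have "i = j" using assms ix_le_K by simp
  then show ?thesis by simp
qed

lemma delta_nonneg: "0 \<le> delta K x"
  unfolding delta_def sK_def using ix_le_K ix_ge_1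
  by (intro divide_nonneg_nonneg sum_nonneg) (auto intro: abs_ord_nonneg)

lemma abs_ord_ix_le_delta: "abs_ord x (ix K x) \<le> delta K x"
proof (cases "ix K x < K")
  case True
  then have "sK K x (ix K x) \<le> sK K x (Suc (ix K x))" using sK_ix_le ix_ge_1 by simp
  then show ?thesis
    unfolding delta_def using sK_le_Suc_iff_abs_ord_le_sK True ix_ge_1 K_less_length by simp
next
  case False
  then have ix: "ix K x = K" using ix_le_K by simp
  have "0 \<le> (\<Sum>j\<in>{Suc K..length x}. abs_ord x j)"
    by (intro sum_nonneg abs_ord_nonneg) auto
  then have "abs_ord x K \<le> abs_ord x K + (\<Sum>j\<in>{Suc K..length x}. abs_ord x j)" by simp
  also have "\<dots> = sK K x K"
    unfolding sK_def using K_less_length by (simp add: sum.atLeast_Suc_atMost)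
  finally show ?thesis unfolding delta_def ix .
qed

lemma sK_less_abs_ord_before_ix:
  assumes "1 \<le> m" "m < ix K x"
  shows "sK K x (Suc m) < abs_ord x m" and "sK K x m < abs_ord x m"
  using sK_Suc_less_before_ix[OF assms] sK_le_Suc_iff_abs_ord_le_sK_Suc[of m K x]
    sK_le_Suc_iff_abs_ord_le_sK[of m K x] assms ix_le_K K_less_length
  by auto

lemma delta_less_abs_ord_before_ix: "1 \<le> m \<Longrightarrow> m < ix K x \<Longrightarrow> delta K x < abs_ord x m"
  using sK_less_abs_ord_before_ix(1)[of m] sK_antimono_upto_ix[of "Suc m" "ix K x"]
  unfolding delta_def by fastforce

lemma u_comp_antimono:
  assumes "1 \<le> i" "i \<le> j" "j \<le> length x"
  shows "u_comp K x j \<le> u_comp K x i"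
proof -
  have "delta K x \<le> abs_ord x i" if "i \<le> ix K x - 1"
  proof -
    have "delta K x < abs_ord x (ix K x - 1)"
      using delta_less_abs_ord_before_ix assms that by simp
    also have "\<dots> \<le> abs_ord x i"
      using abs_ord_antimono[of i "ix K x - 1" x] assms that ix_le_K
        K_less_length by simp
    finally show ?thesis by simp
  qed
  then show ?thesis
    unfolding u_comp_def using abs_ord_antimono[of i j x] delta_nonneg assms
    by auto
qed

lemma ord_comp_uvec: "1 \<le> i \<Longrightarrow> i \<le> length x \<Longrightarrow> ord_comp (uvec K x) i = u_comp K x i"
  using ord_comp_eq_nth_if_nonincreasing[of "uvec K x" i] u_comp_antimono
  by (simp add: length_uvec nth_uvec)

lemma abs_ord_le_u_comp: "1 \<le> i \<Longrightarrow> i \<le> K \<Longrightarrow> abs_ord x i \<le> u_comp K x i"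
  using abs_ord_antimono[of "ix K x" i x] abs_ord_ix_le_delta
    K_less_length ix_ge_1
  unfolding u_comp_def by fastforce

lemma sum_u_comp: "(\<Sum>i=1..K. u_comp K x i) = (\<Sum>i=1..length x. abs_ord x i)"
proof -
  let ?p = "ix K x"
  have p: "1 \<le> ?p" "?p \<le> K" using ix_ge_1 ix_le_K K_gt_1 K_less_length by auto
  have "(\<Sum>i=1..K. u_comp K x i) = (\<Sum>i=1..?p-1. u_comp K x i) + (\<Sum>i=?p..K. u_comp K x i)"
    using sum_atLeastAtMost_split[of 1 "?p - 1" K "u_comp K x"] p by simp
  also have "(\<Sum>i=1..?p-1. u_comp K x i) = (\<Sum>i=1..?p-1. abs_ord x i)"
    by (intro sum.cong) (auto simp: u_comp_def)
  also have "(\<Sum>i=?p..K. u_comp K x i) = (\<Sum>i=?p..K. sK K x ?p)"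
    using p by (intro sum.cong) (auto simp: u_comp_def delta_def)
  also have "\<dots> = (real K - real ?p + 1) * sK K x ?p"
    using p by (simp add: of_nat_diff)
  also have "(real K - real ?p + 1) * sK K x ?p = (\<Sum>i=?p..length x. abs_ord x i)"
    unfolding sK_def using p by simp
  also have "(\<Sum>i=1..?p-1. abs_ord x i) + \<dots> = (\<Sum>i=1..length x. abs_ord x i)"
    using sum_atLeastAtMost_split[of 1 "?p - 1" "length x" "abs_ord x"] p K_less_length by simp
  finally show ?thesis .
qed

lemma majorizes_uvec: "majorizes (uvec K x) (map abs x)"
proof -
  have ord_abs: "ord_comp (map abs x) = abs_ord x" unfolding abs_ord_def by auto
  have prefix_uvec: "(\<Sum>i=1..j. ord_comp (uvec K x) i) = (\<Sum>i=1..j. u_comp K x i)"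
    if "j \<le> length x" for j
    using that ord_comp_uvec by (intro sum.cong) auto
  have u_zero: "u_comp K x i = 0" if "K < i" for i
    using that ix_le_K unfolding u_comp_def by auto
  have a_nonneg: "0 \<le> abs_ord x i" if "K < i" "i \<le> length x" for i
    using abs_ord_nonneg that K_gt_1 by simp
  note dom = prefix_sums_dominated[of K "length x" "abs_ord x" "u_comp K x",
      OF less_imp_le[OF K_less_length] a_nonneg abs_ord_le_u_comp u_zero sum_u_comp]
  have "(\<Sum>i=1..j. abs_ord x i) \<le> (\<Sum>i=1..j. u_comp K x i)" if "j \<le> length x" for j
    using dom(1) that by simp
  moreover have "(\<Sum>i=1..length x. u_comp K x i) = (\<Sum>i=1..length x. abs_ord x i)"
    by (rule dom(2))
  ultimately show ?thesis
    unfolding majorizes_def ord_abs using prefix_uvec by (simp add: length_uvec)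
qed

lemma uvec_first: "uvec K x ! 0 = max (abs_ord x 1) (sK K x 1)"
proof -
  have "0 < length x" using K_less_length by linarith
  then have u0: "uvec K x ! 0 = u_comp K x 1" by (simp add: nth_uvec)
  show ?thesis
  proof (cases "ix K x = 1")
  case True
  then show ?thesis
    using u0 abs_ord_ix_le_delta K_gt_1
    by (simp add: u_comp_def delta_def max_def)
next
  case False
  then have "1 \<le> ix K x - 1" using ix_ge_1 by simp
  then show ?thesis
    using u0 sK_less_abs_ord_before_ix(2)[of 1]
    by (simp add: u_comp_def)
qed
qed

end

theorem mainTheorem5:
  fixes x :: "real list" and K :: nat
  assumes "1 < K" and "K < length x"
  shows "(\<forall>i\<in>{1..K-1}.
            sK K x (i+1) - sK K x i = (sK K x (i+1) - abs_ord x i) / (real K - real i + 1)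
          \<and> sK K x (i+1) - sK K x i = (sK K x i - abs_ord x i) / (real K - real i))
       \<and> (\<forall>i j. 1 \<le> i \<and> i \<le> j \<and> j \<le> ix K x \<longrightarrow> sK K x j \<le> sK K x i)
       \<and> (\<forall>i j. ix K x \<le> i \<and> i \<le> j \<and> j \<le> K \<longrightarrow> sK K x i \<le> sK K x j)
       \<and> majorizes (uvec K x) (map abs x)
       \<and> uvec K x ! 0 = max (abs_ord x 1) (sK K x 1)"
  using sK_Suc_diff[of _ K x] sK_antimono_upto_ix[OF assms] sK_mono_from_ix[OF assms]
    majorizes_uvec[OF assms] uvec_first[OF assms] assms
  by auto

end
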